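(* Let $\sigma\in\mathrm{Spin}(\Sigma_g)$. The assignment $\overline{C}\mapsto(-1)^{q_\sigma(C)}i_C$ extends to a well-defined homomorphism of unital $\mathbb{Z}/8$-algebras $\Phi:W_\sigma\to\mathrm{Map}(H_1(\Sigma_g;\mathbb{Z}/2),\mathbb{Z}/8)$.
   Context: $\Sigma_g$ is a closed oriented genus $g$ surface; $\cdot$ is the mod 2 intersection form on $H_1(\Sigma_g;\mathbb{Z}/2)$. To $\sigma\in\mathrm{Spin}(\Sigma_g)$ is associated (Johnson) a quadratic form $q_\sigma:H_1(\Sigma_g;\mathbb{Z}/2)\to\mathbb{Z}/2$, $q_\sigma(y+z)=q_\sigma(y)+q_\sigma(z)+y\cdot z$. For $z\in H_1(\Sigma_g;\mathbb{Z}/2)$, $i_z(y)=1\in\mathbb{Z}/8$ if $z\cdot y\equiv1\pmod2$ and $0$ otherwise. $\mathrm{Map}(H_1(\Sigma_g;\mathbb{Z}/2),\mathbb{Z}/8)$ is a $\mathbb{Z}/8$-algebra under pointwise operations. $W_\sigma$ is the unital associative commutative $\mathbb{Z}/8$-algebra generated by symbols $\overline{C}$, $C\in H_1(\Sigma_g;\mathbb{Z}/2)$, subject to: (i) $\overline{C_1+C_2}=(-1)^{C_1\cdot C_2}\big((-1)^{q_\sigma(C_2)}\overline{C_1}+(-1)^{q_\sigma(C_1)}\overline{C_2}-2\overline{C_1}\,\overline{C_2}\big)$ for all $C_1\ne C_2$; (ii) $\overline{C}^2=(-1)^{q_\sigma(C)}\overline{C}$ for all $C$. *)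

theory Defs
  imports Main "HOL-Library.Numeral_Type" "HOL-Library.Poly_Mapping"
begin

text \<open>Model of H_1(Sigma_g; Z/2): vectors (nat => Z/2) supported on {0..<2g},
  with standard symplectic basis a_i = e_(2i), b_i = e_(2i+1), i < g.
  Z/2 is the numeral type 2, Z/8 is the numeral type 8.\<close>

definition H1 :: "nat \<Rightarrow> (nat \<Rightarrow> 2) set" where
  "H1 g = {x. \<forall>i\<ge>2*g. x i = 0}"

definition hadd :: "(nat \<Rightarrow> 2) \<Rightarrow> (nat \<Rightarrow> 2) \<Rightarrow> (nat \<Rightarrow> 2)" where
  "hadd x y = (\<lambda>i. x i + y i)"

definition idot :: "nat \<Rightarrow> (nat \<Rightarrow> 2) \<Rightarrow> (nat \<Rightarrow> 2) \<Rightarrow> 2" where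
  "idot g x y = (\<Sum>i<g. x (2*i) * y (2*i+1) + x (2*i+1) * y (2*i))"

text \<open>quadratic refinements of the intersection form (Johnson: these are exactly
  the q_sigma, sigma in Spin(Sigma_g))\<close>
definition quadratic_form :: "nat \<Rightarrow> ((nat \<Rightarrow> 2) \<Rightarrow> 2) \<Rightarrow> bool" where
  "quadratic_form g q \<longleftrightarrow>
     (\<forall>y\<in>H1 g. \<forall>z\<in>H1 g. q (hadd y z) = q y + q z + idot g y z)"

definition sgn8 :: "2 \<Rightarrow> 8" where
  "sgn8 a = (if a = 0 then 1 else -1)"

definition i_fun :: "nat \<Rightarrow> (nat \<Rightarrow> 2) \<Rightarrow> (nat \<Rightarrow> 2) \<Rightarrow> 8" where
  "i_fun g z y = (if idot g z y = 1 then 1 else 0)"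

type_synonym poly8 = "((nat \<Rightarrow> 2) \<Rightarrow>\<^sub>0 nat) \<Rightarrow>\<^sub>0 8"

definition Xv :: "(nat \<Rightarrow> 2) \<Rightarrow> poly8" where
  "Xv C = Poly_Mapping.single (Poly_Mapping.single C 1) 1"

definition pscale :: "8 \<Rightarrow> poly8 \<Rightarrow> poly8" where
  "pscale c p = Poly_Mapping.single 0 c * p"

text \<open>Defining relations of W_sigma. Variables X_C with C outside H1 g are
  spurious (not elements of H_1) and are killed, so that poly8 / ideal = W_sigma.\<close>
definition W_relations :: "nat \<Rightarrow> ((nat \<Rightarrow> 2) \<Rightarrow> 2) \<Rightarrow> poly8 set" where
  "W_relations g q =
     {Xv (hadd C1 C2) - pscale (sgn8 (idot g C1 C2))
         (pscale (sgn8 (q C2)) (Xv C1) + pscale (sgn8 (q C1)) (Xv C2) - 2 * Xv C1 * Xv C2)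
        | C1 C2. C1 \<in> H1 g \<and> C2 \<in> H1 g \<and> C1 \<noteq> C2}
   \<union> {Xv C * Xv C - pscale (sgn8 (q C)) (Xv C) | C. C \<in> H1 g}
   \<union> {Xv C | C. C \<notin> H1 g}"

definition ideal_gen :: "'a::comm_ring_1 set \<Rightarrow> 'a set" where
  "ideal_gen R = {p. \<exists>S r. finite S \<and> S \<subseteq> R \<and> p = (\<Sum>s\<in>S. r s * s)}"

text \<open>Unital Z/8-algebra homomorphisms poly8 -> Map(H1 g, Z/8) (pointwise operations
  on H1 g), i.e. functions considered only on the carrier H1 g.\<close>
definition alg_hom_to_Map :: "nat \<Rightarrow> (poly8 \<Rightarrow> (nat \<Rightarrow> 2) \<Rightarrow> 8) \<Rightarrow> bool" where
  "alg_hom_to_Map g \<Phi> \<longleftrightarrow>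
     (\<forall>y\<in>H1 g. \<Phi> 1 y = 1) \<and>
     (\<forall>p p'. \<forall>y\<in>H1 g. \<Phi> (p + p') y = \<Phi> p y + \<Phi> p' y) \<and>
     (\<forall>p p'. \<forall>y\<in>H1 g. \<Phi> (p * p') y = \<Phi> p y * \<Phi> p' y) \<and>
     (\<forall>c p. \<forall>y\<in>H1 g. \<Phi> (pscale c p) y = c * \<Phi> p y)"

end

theory Submission
  imports Defs
begin

text \<open>Every point y gives a substitution homomorphism of the polynomial ring sending X_C to
  (-1)^(q C) [C.y = 1]; together they form an algebra homomorphism into Map(H_1, Z/8), and
  it kills the ideal because these values satisfy the defining relations. Relation (i) comes
  from two identities in Z/8: the indicator of d + e = 1 is [d] + [e] - 2[d][e], and
  (-1)^(q(C1+C2)) = (-1)^(q C1) (-1)^(q C2) (-1)^(C1.C2) by the quadratic property of q.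
  Relation (ii) is idempotence of indicators together with ((-1)^a)^2 = 1.\<close>

definition pm_eval :: "('a \<Rightarrow> 'b::comm_ring_1) \<Rightarrow> ('a \<Rightarrow>\<^sub>0 'b) \<Rightarrow> 'b" where
  "pm_eval f p = (\<Sum>m\<in>Poly_Mapping.keys p. Poly_Mapping.lookup p m * f m)"

lemma pm_eval_superset:
  assumes "finite K" "Poly_Mapping.keys p \<subseteq> K"
  shows "pm_eval f p = (\<Sum>m\<in>K. Poly_Mapping.lookup p m * f m)"
  unfolding pm_eval_def
  by (rule sum.mono_neutral_left) (use assms in \<open>auto simp: in_keys_iff\<close>)

lemma pm_eval_zero [simp]: "pm_eval f 0 = 0"
  by (simp add: pm_eval_def)

lemma pm_eval_single [simp]: "pm_eval f (Poly_Mapping.single k c) = c * f k"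
  by (cases "c = 0") (simp_all add: pm_eval_def)

lemma pm_eval_add: "pm_eval f (p + q) = pm_eval f p + pm_eval f q"
proof -
  let ?K = "Poly_Mapping.keys p \<union> Poly_Mapping.keys q"
  show ?thesis
    by (simp add: pm_eval_superset[OF _ keys_add] pm_eval_superset[of ?K p]
        pm_eval_superset[of ?K q] lookup_add distrib_right sum.distrib)
qed

lemma pm_eval_diff: "pm_eval f (p - q) = pm_eval f p - pm_eval f q"
  using pm_eval_add[of f "p - q" q] by (simp add: algebra_simps)

lemma pm_eval_sum: "pm_eval f (\<Sum>i\<in>I. h i) = (\<Sum>i\<in>I. pm_eval f (h i))"
  by (induction I rule: infinite_finite_induct) (auto simp: pm_eval_add)

lemma poly_mapping_sum_single:
  "(\<Sum>m\<in>Poly_Mapping.keys p. Poly_Mapping.single m (Poly_Mapping.lookup p m)) = p"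
proof (rule poly_mapping_eqI)
  fix k
  have "Poly_Mapping.lookup (\<Sum>m\<in>Poly_Mapping.keys p. Poly_Mapping.single m (Poly_Mapping.lookup p m)) k
      = (\<Sum>m\<in>Poly_Mapping.keys p. if m = k then Poly_Mapping.lookup p m else 0)"
    by (simp add: lookup_sum lookup_single when_def eq_commute)
  also have "\<dots> = Poly_Mapping.lookup p k"
    by (simp add: sum.delta in_keys_iff)
  finally show "Poly_Mapping.lookup (\<Sum>m\<in>Poly_Mapping.keys p.
      Poly_Mapping.single m (Poly_Mapping.lookup p m)) k = Poly_Mapping.lookup p k" .
qed

lemma pm_eval_mult:
  fixes f :: "'a::monoid_add \<Rightarrow> 'b::comm_ring_1"
  assumes f_add: "\<And>a b. f (a + b) = f a * f b"
  shows "pm_eval f (p * q) = pm_eval f p * pm_eval f q"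
proof -
  let ?P = "Poly_Mapping.keys p" and ?Q = "Poly_Mapping.keys q"
  let ?sp = "\<lambda>m. Poly_Mapping.single m (Poly_Mapping.lookup p m)"
  let ?sq = "\<lambda>n. Poly_Mapping.single n (Poly_Mapping.lookup q n)"
  have "p * q = (\<Sum>m\<in>?P. \<Sum>n\<in>?Q. ?sp m * ?sq n)"
    by (simp add: poly_mapping_sum_single sum_product flip: sum_product)
  then have "pm_eval f (p * q) = (\<Sum>m\<in>?P. \<Sum>n\<in>?Q. pm_eval f (?sp m * ?sq n))"
    by (simp add: pm_eval_sum)
  also have "\<dots> = (\<Sum>m\<in>?P. \<Sum>n\<in>?Q.
      (Poly_Mapping.lookup p m * f m) * (Poly_Mapping.lookup q n * f n))"
    by (simp add: mult_single f_add mult_ac)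
  also have "\<dots> = pm_eval f p * pm_eval f q"
    by (simp add: pm_eval_def sum_product)
  finally show ?thesis .
qed

definition monomial_value :: "('a \<Rightarrow> 'b::comm_ring_1) \<Rightarrow> ('a \<Rightarrow>\<^sub>0 nat) \<Rightarrow> 'b" where
  "monomial_value v m = (\<Prod>C\<in>Poly_Mapping.keys m. v C ^ Poly_Mapping.lookup m C)"

lemma monomial_value_superset:
  assumes "finite K" "Poly_Mapping.keys m \<subseteq> K"
  shows "monomial_value v m = (\<Prod>C\<in>K. v C ^ Poly_Mapping.lookup m C)"
  unfolding monomial_value_def
  by (rule prod.mono_neutral_left) (use assms in \<open>auto simp: in_keys_iff\<close>)

lemma monomial_value_zero [simp]: "monomial_value v 0 = 1"
  by (simp add: monomial_value_def)

lemma monomial_value_single_one [simp]: "monomial_value v (Poly_Mapping.single C 1) = v C"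
  by (simp add: monomial_value_def)

lemma monomial_value_add: "monomial_value v (a + b) = monomial_value v a * monomial_value v b"
proof -
  let ?K = "Poly_Mapping.keys a \<union> Poly_Mapping.keys b"
  show ?thesis
    by (simp add: monomial_value_superset[OF _ keys_add] monomial_value_superset[of ?K a]
        monomial_value_superset[of ?K b] lookup_add power_add prod.distrib)
qed

definition poly_subst :: "('a \<Rightarrow> 'b::comm_ring_1) \<Rightarrow> (('a \<Rightarrow>\<^sub>0 nat) \<Rightarrow>\<^sub>0 'b) \<Rightarrow> 'b" where
  "poly_subst v = pm_eval (monomial_value v)"

lemma poly_subst_one [simp]: "poly_subst v 1 = 1"
  by (metis poly_subst_def pm_eval_single monomial_value_zero mult_1 single_one)

lemma poly_subst_numeral [simp]: "poly_subst v (numeral n) = numeral n"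
  by (metis poly_subst_def pm_eval_single monomial_value_zero mult_1_right single_numeral)

lemma poly_subst_add [simp]: "poly_subst v (p + q) = poly_subst v p + poly_subst v q"
  by (simp add: poly_subst_def pm_eval_add)

lemma poly_subst_diff [simp]: "poly_subst v (p - q) = poly_subst v p - poly_subst v q"
  by (simp add: poly_subst_def pm_eval_diff)

lemma poly_subst_mult [simp]: "poly_subst v (p * q) = poly_subst v p * poly_subst v q"
  by (simp add: poly_subst_def pm_eval_mult monomial_value_add)

lemma poly_subst_sum: "poly_subst v (\<Sum>i\<in>I. h i) = (\<Sum>i\<in>I. poly_subst v (h i))"
  by (simp add: poly_subst_def pm_eval_sum)

lemma poly_subst_pscale [simp]: "poly_subst v (pscale c p) = c * poly_subst v p"
  by (simp add: pscale_def poly_subst_def [where v = v] pm_eval_mult monomial_value_add)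

lemma poly_subst_Xv [simp]: "poly_subst v (Xv C) = v C"
  unfolding Xv_def poly_subst_def pm_eval_single monomial_value_single_one by simp

lemma poly_subst_ideal_gen_eq_0:
  assumes "\<And>r. r \<in> R \<Longrightarrow> poly_subst v r = 0" and "p \<in> ideal_gen R"
  shows "poly_subst v p = 0"
proof -
  from \<open>p \<in> ideal_gen R\<close> obtain S c where S: "finite S" "S \<subseteq> R" "p = (\<Sum>s\<in>S. c s * s)"
    unfolding ideal_gen_def by blast
  then have "poly_subst v p = (\<Sum>s\<in>S. poly_subst v (c s) * poly_subst v s)"
    by (simp add: poly_subst_sum)
  also have "\<dots> = 0"
    using S(2) assms(1) by (auto intro!: sum.neutral)
  finally show ?thesis .
qed

lemma alg_hom_to_Map_poly_subst: "alg_hom_to_Map g (\<lambda>p y. poly_subst (v y) p)"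
  by (simp add: alg_hom_to_Map_def)

lemma Z2_cases: "(x::2) = 0 \<or> x = 1"
proof (cases x)
  case (of_int z)
  then have "z = 0 \<or> z = 1" by auto
  then show ?thesis using of_int by auto
qed

lemma sgn8_add: "sgn8 (a + b) = sgn8 a * sgn8 b"
  using Z2_cases[of a] Z2_cases[of b] by (auto simp: sgn8_def)

lemma sgn8_square: "sgn8 a * sgn8 a = 1"
  using Z2_cases[of a] by (auto simp: sgn8_def)

lemma idot_hadd: "idot g (hadd x z) y = idot g x y + idot g z y"
  by (simp add: idot_def hadd_def sum.distrib[symmetric] algebra_simps)

lemma i_fun_hadd:
  "i_fun g (hadd x z) y = i_fun g x y + i_fun g z y - 2 * i_fun g x y * i_fun g z y"
  using Z2_cases[of "idot g x y"] Z2_cases[of "idot g z y"]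
  by (auto simp: i_fun_def idot_hadd)

lemma i_fun_idem: "i_fun g x y * i_fun g x y = i_fun g x y"
  by (simp add: i_fun_def)

lemma hadd_H1: "x \<in> H1 g \<Longrightarrow> z \<in> H1 g \<Longrightarrow> hadd x z \<in> H1 g"
  by (simp add: H1_def hadd_def)

text \<open>The value 0 off H1 g is forced by the relations X_C for spurious C.\<close>
definition signed_i_fun :: "nat \<Rightarrow> ((nat \<Rightarrow> 2) \<Rightarrow> 2) \<Rightarrow> (nat \<Rightarrow> 2) \<Rightarrow> (nat \<Rightarrow> 2) \<Rightarrow> 8" where
  "signed_i_fun g q C y = (if C \<in> H1 g then sgn8 (q C) * i_fun g C y else 0)"

lemma signed_i_fun_hadd:
  assumes "quadratic_form g q" "C1 \<in> H1 g" "C2 \<in> H1 g"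
  shows "signed_i_fun g q (hadd C1 C2) y = sgn8 (idot g C1 C2) *
    (sgn8 (q C2) * signed_i_fun g q C1 y + sgn8 (q C1) * signed_i_fun g q C2 y
      - 2 * signed_i_fun g q C1 y * signed_i_fun g q C2 y)"
proof -
  let ?s1 = "sgn8 (q C1)" and ?s2 = "sgn8 (q C2)"
  have "sgn8 (q (hadd C1 C2)) = ?s1 * ?s2 * sgn8 (idot g C1 C2)"
    using assms unfolding quadratic_form_def by (simp add: sgn8_add)
  moreover have "?s1 * ?s2 * (?s1 * ?s2) = 1"
    using sgn8_square[of "q C1"] sgn8_square[of "q C2"] by (simp add: algebra_simps)
  ultimately show ?thesis
    using assms hadd_H1[OF assms(2,3)]
    by (simp add: signed_i_fun_def i_fun_hadd algebra_simps)
qed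

lemma signed_i_fun_square:
  "signed_i_fun g q C y * signed_i_fun g q C y = sgn8 (q C) * signed_i_fun g q C y"
  using sgn8_square[of "q C"] i_fun_idem[of g C y]
  by (simp add: signed_i_fun_def algebra_simps)

lemma poly_subst_W_relations:
  assumes q: "quadratic_form g q" and r: "r \<in> W_relations g q"
  shows "poly_subst (\<lambda>C. signed_i_fun g q C y) r = 0"
proof -
  from r consider
      (sum) C1 C2 where "C1 \<in> H1 g" "C2 \<in> H1 g" "r = Xv (hadd C1 C2) - pscale (sgn8 (idot g C1 C2))
         (pscale (sgn8 (q C2)) (Xv C1) + pscale (sgn8 (q C1)) (Xv C2) - 2 * Xv C1 * Xv C2)"
    | (square) C where "r = Xv C * Xv C - pscale (sgn8 (q C)) (Xv C)"
    | (spurious) C where "C \<notin> H1 g" "r = Xv C"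
    unfolding W_relations_def by blast
  then show ?thesis
  proof cases
    case sum
    then show ?thesis by (simp add: signed_i_fun_hadd[OF q])
  next
    case square
    then show ?thesis by (simp add: signed_i_fun_square)
  next
    case spurious
    then show ?thesis by (simp add: signed_i_fun_def)
  qed
qed

theorem proposition6p2:
  fixes g :: nat and q :: "(nat \<Rightarrow> 2) \<Rightarrow> 2"
  assumes "quadratic_form g q"
  shows "\<exists>\<Phi>. alg_hom_to_Map g \<Phi>
           \<and> (\<forall>p\<in>ideal_gen (W_relations g q). \<forall>y\<in>H1 g. \<Phi> p y = 0)
           \<and> (\<forall>C\<in>H1 g. \<forall>y\<in>H1 g. \<Phi> (Xv C) y = sgn8 (q C) * i_fun g C y)"
proof (intro exI conjI ballI)
  let ?\<Phi> = "\<lambda>p y. poly_subst (\<lambda>C. signed_i_fun g q C y) p"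
  show "alg_hom_to_Map g ?\<Phi>"
    by (rule alg_hom_to_Map_poly_subst)
  show "?\<Phi> p y = 0" if "p \<in> ideal_gen (W_relations g q)" for p y
    using poly_subst_ideal_gen_eq_0[OF poly_subst_W_relations[OF assms] that] .
  show "?\<Phi> (Xv C) y = sgn8 (q C) * i_fun g C y" if "C \<in> H1 g" for C y
    using that by (simp add: signed_i_fun_def)
qed

end
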